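(* Let $\gamma_1$ be the type-1 greedy submodularity ratio of $f_{Pa}$ with respect to a run of Algorithm 2 (defined in the context). Then $$\gamma_1\ge\min_{j\in\{0,\dots,|\mathcal{Y}_2|\}}\frac{\lambda_2(F_p+H(\mathcal{Y}_2^j))\,\lambda_2(F_p+H(\{z_j\}\cup\mathcal{Y}_2^j))}{\lambda_1(F_p+H(\mathcal{Y}_2^j))\,\lambda_1(F_p+H(\{z_j\}\cup\mathcal{Y}_2^j))},$$ where, for each $j$, $z_j\in\arg\min_{y\in\bar{\mathcal{M}}\setminus\mathcal{Y}_2^j}\frac{\lambda_2(F_p+H(\{y\}\cup\mathcal{Y}_2^j))}{\lambda_1(F_p+H(\{y\}\cup\mathcal{Y}_2^j))}$.
   Context: For a symmetric positive semidefinite $2\times2$ matrix $P$, $\lambda_1(P)\ge\lambda_2(P)$ are its eigenvalues. Setting: networked SIR model on directed graph $\mathcal{G}=(\mathcal{V},\mathcal{E})$, $\mathcal{V}=[n]$, $\bar{\mathcal{N}}_i=\{j:(j,i)\in\mathcal{E}\}\cup\{i\}$, weights $a_{ij}\ge0$, sampling parameter $h$, dynamics $s_i[k+1]=s_i[k]-hs_i[k]\beta\sum_{j\in\bar{\mathcal{N}}_i}a_{ij}x_j[k]$, $x_i[k+1]=(1-h\delta)x_i[k]+hs_i[k]\beta\sum_{j\in\bar{\mathcal{N}}_i}a_{ij}x_j[k]$, $r_i[k+1]=r_i[k]+h\delta x_i[k]$, known initial condition, $\theta=[\beta\ \delta]^T$ with prior pdf $p(\theta)$; $x_i[k],r_i[k]\in[0,1)$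 viewed as functions of $\theta$. Given integers $1\le t_1\le t_2$, integers $N_i^x,N_i^r,\zeta_i,\eta_i\ge1$, costs $c_{k,i},b_{k,i}>0$, budget $B\ge0$. Ground set $\bar{\mathcal{M}}=\{(\hat x_i[k],l):i\in\mathcal{V},k\in\{t_1,\dots,t_2\},l\in[\zeta_i]\}\cup\{(\hat r_i[k],l):i\in\mathcal{V},k\in\{t_1,\dots,t_2\},l\in[\eta_i]\}$ with $c((\hat x_i[k],l))=c_{k,i}$, $c((\hat r_i[k],l))=b_{k,i}$, $c(\mathcal{Y})=\sum_{y\in\mathcal{Y}}c(y)$. $H_y=\mathbb{E}_\theta\big[\frac{N_i^x}{x_i[k](1-x_i[k])}\frac{\partial x_i[k]}{\partial\theta}(\frac{\partial x_i[k]}{\partial\theta})^T\big]$ for $y=(\hat x_i[k],l)$, analogously with $r$, $N_i^r$ for $y=(\hat r_i[k],l)$ (integrand $0$ where the state is $0$), $\mathbb{E}_\theta$ w.r.t. $p(\theta)$; $H_y\succeq0$; $H(\mathcal{Y})=\sum_{y\in\mathcal{Y}}H_y$. $F_p=\mathbb{E}_\theta[\nabla_\theta\ln p(\theta)\nabla_\theta\ln p(\theta)^T]\succ0$. $f_{Pa}(\mathcal{Y})=\mathrm{Tr}(F_p^{-1})-\mathrm{Tr}((F_p+H(\mathcal{Y}))^{-1})$. $\hat f_{Pa}$ is a set function approximating $f_{Pa}$ with $\hat f_{Pa}(\emptyset)=0$. Algorithm 2: (1) $\mathcal{Y}_1=\{y\}$ with $y\in\arg\max_{y\in\bar{\mathcal{M}}}\hat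 f_{Pa}(\{y\})$; (2) $\mathcal{Y}_2=\emptyset$, $\mathcal{C}=\bar{\mathcal{M}}$; (3) while $\mathcal{C}\ne\emptyset$: choose $y^\star\in\arg\max_{y\in\mathcal{C}}\frac{\hat f_{Pa}(\{y\}\cup\mathcal{Y}_2)-\hat f_{Pa}(\mathcal{Y}_2)}{c(y)}$; if $c(y^\star)+c(\mathcal{Y}_2)\le B$ add $y^\star$ to $\mathcal{Y}_2$; remove $y^\star$ from $\mathcal{C}$; (4) output the better of $\mathcal{Y}_1,\mathcal{Y}_2$ under $\hat f_{Pa}$. $\mathcal{Y}_2^j$ denotes the set of the first $j$ elements added to $\mathcal{Y}_2$ ($\mathcal{Y}_2^0=\emptyset$), $\mathcal{Y}_2$ the final set. The type-1 greedy submodularity ratio $\gamma_1$ is the largest real with $\sum_{y\in\mathcal{A}\setminus\mathcal{Y}_2^j}(f_{Pa}(\{y\}\cup\mathcal{Y}_2^j)-f_{Pa}(\mathcal{Y}_2^j))\ge\gamma_1(f_{Pa}(\mathcal{A}\cup\mathcal{Y}_2^j)-f_{Pa}(\mathcal{Y}_2^j))$ for all $\mathcal{A}\subseteq\bar{\mathcal{M}}$ and all $j\in\{0,\dots,|\mathcal{Y}_2|\}$. *)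

theory Defs
  imports "HOL-Analysis.Analysis"
begin

type_synonym mat2 = "real^2^2"

definition psd2 :: "mat2 \<Rightarrow> bool" where
  "psd2 P \<longleftrightarrow> transpose P = P \<and> (\<forall>v::real^2. 0 \<le> v \<bullet> (P *v v))"

definition pd2 :: "mat2 \<Rightarrow> bool" where
  "pd2 P \<longleftrightarrow> transpose P = P \<and> (\<forall>v::real^2. v \<noteq> 0 \<longrightarrow> 0 < v \<bullet> (P *v v))"

definition eigvals2 :: "mat2 \<Rightarrow> real set" where
  "eigvals2 P = {l. \<exists>v::real^2. v \<noteq> 0 \<and> P *v v = l *\<^sub>R v}"

definition lam1 :: "mat2 \<Rightarrow> real" where "lam1 P = Max (eigvals2 P)"
definition lam2 :: "mat2 \<Rightarrow> real" where "lam2 P = Min (eigvals2 P)"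

definition Hset :: "('a \<Rightarrow> mat2) \<Rightarrow> 'a set \<Rightarrow> mat2" where
  "Hset H Y = (\<Sum>y\<in>Y. H y)"

definition fPa :: "mat2 \<Rightarrow> ('a \<Rightarrow> mat2) \<Rightarrow> 'a set \<Rightarrow> real" where
  "fPa Fp H Y = trace (matrix_inv Fp) - trace (matrix_inv (Fp + Hset H Y))"

text \<open>Accepted elements (in order of addition to Y_2) when the candidates ys are
  processed in order by step (3) of Algorithm 2 with costs c and budget B.\<close>
definition greedy_acc :: "('a \<Rightarrow> real) \<Rightarrow> real \<Rightarrow> 'a list \<Rightarrow> 'a list" where
  "greedy_acc c B ys =
     foldl (\<lambda>S y. if c y + sum c (set S) \<le> B then S @ [y] else S) [] ys"

text \<open>ps is a valid processing order of step (3) of Algorithm 2 on ground set M: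
  it enumerates M (each element of C is removed exactly once), and at each step the
  chosen element maximises the cost-normalised marginal gain of fhat over the remaining
  candidates, relative to the current Y_2.\<close>
definition alg2_run :: "('a set \<Rightarrow> real) \<Rightarrow> ('a \<Rightarrow> real) \<Rightarrow> real \<Rightarrow> 'a set \<Rightarrow> 'a list \<Rightarrow> bool" where
  "alg2_run fh c B M ps \<longleftrightarrow> distinct ps \<and> set ps = M \<and>
     (\<forall>i < length ps. \<forall>y \<in> set (drop i ps).
        let S = set (greedy_acc c B (take i ps)) in
        (fh (insert y S) - fh S) / c y \<le> (fh (insert (ps ! i) S) - fh S) / c (ps ! i))"

definition Y2j :: "('a \<Rightarrow> real) \<Rightarrow> real \<Rightarrow> 'a list \<Rightarrow> nat \<Rightarrow> 'a set" where
  "Y2j c B ps j = set (take j (greedy_acc c B ps))"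

text \<open>gamma satisfies the defining inequality of the type-1 greedy submodularity ratio
  of f with respect to the sets Y 0, ..., Y n (n = |Y_2|).\<close>
definition gsr1_ok :: "('a set \<Rightarrow> real) \<Rightarrow> 'a set \<Rightarrow> (nat \<Rightarrow> 'a set) \<Rightarrow> nat \<Rightarrow> real \<Rightarrow> bool" where
  "gsr1_ok f M Y n g \<longleftrightarrow>
     (\<forall>A. A \<subseteq> M \<longrightarrow> (\<forall>j \<le> n.
        (\<Sum>y\<in>A - Y j. f (insert y (Y j)) - f (Y j)) \<ge> g * (f (A \<union> Y j) - f (Y j))))"

end

theory Submission
  imports Defs
begin

(* For P positive definite and G positive semidefinite, congruence with a square root of P
   and the order reversal of matrix inversion give
     tr G / (lam1 P * lam1 (P + G))  <=  tr P^-1 - tr (P + G)^-1  <=  tr G / (lam2 P * lam2 (P + G)).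
   Take P = F_p + H(Y_2^j) and G = H(A - Y_2^j). The lower bound applied to each singleton gain and
   the upper bound applied to the joint gain compare the two sides of the submodularity-ratio
   inequality term by term, because tr is additive and, by monotonicity of lam2,
     lam1 (P + H_y) * lam2 (P + H_z) / lam1 (P + H_z)  <=  lam2 (P + H_y)  <=  lam2 (P + G)
   for the minimiser z = z_j. *)

lemma mat2_eq_iff:
  "(A::mat2) = B \<longleftrightarrow> A$1$1 = B$1$1 \<and> A$1$2 = B$1$2 \<and> A$2$1 = B$2$1 \<and> A$2$2 = B$2$2"
  by (auto simp: vec_eq_iff forall_2)

lemma matrix_matrix_mult_2: "((A::mat2) ** B)$i$j = A$i$1 * B$1$j + A$i$2 * B$2$j"
  by (simp add: matrix_matrix_mult_def sum_2)

lemma matrix_vector_mult_2: "((A::mat2) *v x)$i = A$i$1 * x$1 + A$i$2 * x$2"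
  by (simp add: matrix_vector_mult_def sum_2)

lemma inner_2: "(x::real^2) \<bullet> y = x$1 * y$1 + x$2 * y$2"
  by (simp add: inner_vec_def sum_2)

lemma trace_2: "trace (A::mat2) = A$1$1 + A$2$2"
  by (simp add: trace_def sum_2)

lemma mat_2 [simp]:
  "(mat k :: mat2)$1$1 = k" "(mat k :: mat2)$1$2 = 0" "(mat k :: mat2)$2$1 = 0" "(mat k :: mat2)$2$2 = k"
  by (simp_all add: mat_def)

lemma symmetric_2_iff: "transpose (A::mat2) = A \<longleftrightarrow> A$2$1 = A$1$2"
  by (auto simp: mat2_eq_iff transpose_def)

lemma quadratic_form_2:
  "(x::real^2) \<bullet> ((A::mat2) *v x) = A$1$1 * x$1^2 + (A$1$2 + A$2$1) * x$1 * x$2 + A$2$2 * x$2^2"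
  by (simp add: inner_2 matrix_vector_mult_2 power2_eq_square algebra_simps)

section \<open>Eigenvalues and the Loewner order\<close>

lemma det_eq_0_iff_kernel: "det (A::real^'n^'n) = 0 \<longleftrightarrow> (\<exists>x. x \<noteq> 0 \<and> A *v x = 0)"
  using det_eq_0_rank less_rank_noninjective vec.inj_iff_eq_0 by blast

lemma eigvals2_iff_det: "l \<in> eigvals2 A \<longleftrightarrow> det (A - l *\<^sub>R mat 1) = 0"
proof -
  have "(A - l *\<^sub>R mat 1) *v x = A *v x - l *\<^sub>R x" for x
    by (simp add: vec_eq_iff forall_2 matrix_vector_mult_2 algebra_simps)
  then show ?thesis
    unfolding eigvals2_def det_eq_0_iff_kernel by simp
qed

definition eigen_gap2 :: "mat2 \<Rightarrow> real" where
  "eigen_gap2 A = sqrt ((A$1$1 - A$2$2)^2 + 4 * (A$1$2)^2)"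

lemma eigen_gap2_ge: "\<bar>A$1$1 - A$2$2\<bar> \<le> eigen_gap2 A"
  unfolding eigen_gap2_def by (rule real_le_rsqrt) simp

lemma det_sub_scaleR_2:
  assumes "transpose A = A"
  shows "det (A - l *\<^sub>R mat 1) = (l - (trace A - eigen_gap2 A) / 2) * (l - (trace A + eigen_gap2 A) / 2)"
proof -
  have "(eigen_gap2 A)^2 = (A$1$1 - A$2$2)^2 + 4 * (A$1$2)^2"
    by (simp add: eigen_gap2_def)
  then show ?thesis
    using assms by (simp add: det_2 trace_2 symmetric_2_iff power2_eq_square field_simps)
qed

lemma eigvals2_symmetric:
  assumes "transpose A = A"
  shows "eigvals2 A = {(trace A - eigen_gap2 A) / 2, (trace A + eigen_gap2 A) / 2}"
  by (auto simp: eigvals2_iff_det det_sub_scaleR_2[OF assms])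

lemma lam1_eq: "transpose A = A \<Longrightarrow> lam1 A = (trace A + eigen_gap2 A) / 2"
  using eigen_gap2_ge[of A] by (simp add: lam1_def eigvals2_symmetric)

lemma lam2_eq: "transpose A = A \<Longrightarrow> lam2 A = (trace A - eigen_gap2 A) / 2"
  using eigen_gap2_ge[of A] by (simp add: lam2_def eigvals2_symmetric)

lemma eigvals2_eq_lam: "transpose A = A \<Longrightarrow> eigvals2 A = {lam2 A, lam1 A}"
  by (simp add: eigvals2_symmetric lam1_eq lam2_eq)

lemma lam2_le_lam1: "transpose A = A \<Longrightarrow> lam2 A \<le> lam1 A"
  using eigen_gap2_ge[of A] by (simp add: lam1_eq lam2_eq)

lemma det_eq_lam1_lam2: "transpose A = A \<Longrightarrow> det A = lam1 A * lam2 A"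
  using det_sub_scaleR_2[of A 0] by (simp add: lam1_eq lam2_eq)

lemma lam2_sub_scaleR: "transpose A = A \<Longrightarrow> lam2 (A - \<mu> *\<^sub>R mat 1) = lam2 A - \<mu>"
  by (simp add: lam2_eq symmetric_2_iff trace_2 eigen_gap2_def)

lemma lam2_scaleR_sub:
  assumes "transpose A = A"
  shows "lam2 (\<mu> *\<^sub>R mat 1 - A) = \<mu> - lam1 A"
proof -
  have "transpose (\<mu> *\<^sub>R mat 1 - A) = \<mu> *\<^sub>R mat 1 - A"
    using assms by (simp add: symmetric_2_iff)
  moreover have "eigen_gap2 (\<mu> *\<^sub>R mat 1 - A) = eigen_gap2 A"
    by (simp add: eigen_gap2_def power2_commute)
  ultimately show ?thesis
    using assms by (simp add: lam1_eq lam2_eq trace_2 field_simps)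
qed

lemma trace_eq_lam1_lam2: "transpose A = A \<Longrightarrow> trace A = lam1 A + lam2 A"
  by (simp add: lam1_eq lam2_eq field_simps)

lemma lam2_nonneg_iff: "transpose A = A \<Longrightarrow> 0 \<le> lam2 A \<longleftrightarrow> 0 \<le> trace A \<and> 0 \<le> det A"
  using lam2_le_lam1[of A]
  by (auto simp: det_eq_lam1_lam2 trace_eq_lam1_lam2 zero_le_mult_iff)

lemma lam2_eigenvector: "transpose A = A \<Longrightarrow> \<exists>v. v \<noteq> 0 \<and> A *v v = lam2 A *\<^sub>R v"
  using eigvals2_eq_lam[of A] unfolding eigvals2_def by blast

lemma quadratic_form_nonneg:
  fixes a b d x y :: real
  assumes "0 \<le> a" "0 \<le> d" "b^2 \<le> a * d"
  shows "0 \<le> a * x^2 + 2 * b * x * y + d * y^2"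
proof (cases "a = 0")
  case True
  then show ?thesis using assms by simp
next
  case False
  have "a * (a * x^2 + 2 * b * x * y + d * y^2) = (a * x + b * y)^2 + (a * d - b^2) * y^2"
    by (simp add: power2_eq_square algebra_simps)
  also have "\<dots> \<ge> 0" using assms by simp
  finally show ?thesis using assms False by (simp add: zero_le_mult_iff)
qed

lemma lam2_nonneg_iff_entries:
  assumes "transpose A = A"
  shows "0 \<le> lam2 A \<longleftrightarrow> 0 \<le> A$1$1 \<and> 0 \<le> A$2$2 \<and> (A$1$2)^2 \<le> A$1$1 * A$2$2"
proof -
  have "0 \<le> lam2 A \<longleftrightarrow> 0 \<le> A$1$1 + A$2$2 \<and> (A$1$2)^2 \<le> A$1$1 * A$2$2"
    using assms by (simp add: lam2_nonneg_iff trace_2 det_2 symmetric_2_iff power2_eq_square)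
  also have "\<dots> \<longleftrightarrow> 0 \<le> A$1$1 \<and> 0 \<le> A$2$2 \<and> (A$1$2)^2 \<le> A$1$1 * A$2$2"
    using order_trans[OF zero_le_power2, of "A$1$2" "A$1$1 * A$2$2"]
    by (auto simp: zero_le_mult_iff)
  finally show ?thesis .
qed

lemma psd2_iff_lam2: "psd2 A \<longleftrightarrow> transpose A = A \<and> 0 \<le> lam2 A"
proof
  assume psd: "psd2 A"
  then have sym: "transpose A = A" by (simp add: psd2_def)
  obtain v where "v \<noteq> 0" and v: "A *v v = lam2 A *\<^sub>R v"
    using lam2_eigenvector[OF sym] by blast
  moreover have "0 \<le> v \<bullet> (A *v v)" using psd by (simp add: psd2_def)
  moreover have "0 < v \<bullet> v" using \<open>v \<noteq> 0\<close> by simp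
  ultimately show "transpose A = A \<and> 0 \<le> lam2 A"
    using sym by (auto simp: zero_le_mult_iff)
next
  assume "transpose A = A \<and> 0 \<le> lam2 A"
  then have sym: "A$2$1 = A$1$2"
    and entries: "0 \<le> A$1$1" "0 \<le> A$2$2" "(A$1$2)^2 \<le> A$1$1 * A$2$2"
    by (auto simp: lam2_nonneg_iff_entries symmetric_2_iff)
  then have "0 \<le> x \<bullet> (A *v x)" for x
    using quadratic_form_nonneg[OF entries] by (simp add: quadratic_form_2)
  then show "psd2 A" using sym by (simp add: psd2_def symmetric_2_iff)
qed

lemma psd2_iff_entries:
  "psd2 A \<longleftrightarrow> A$2$1 = A$1$2 \<and> 0 \<le> A$1$1 \<and> 0 \<le> A$2$2 \<and> (A$1$2)^2 \<le> A$1$1 * A$2$2"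
  by (auto simp: psd2_iff_lam2 lam2_nonneg_iff_entries symmetric_2_iff)

lemma pd2_lam2_pos:
  assumes "pd2 A"
  shows "0 < lam2 A"
proof -
  have sym: "transpose A = A" using assms by (simp add: pd2_def)
  obtain v where "v \<noteq> 0" and v: "A *v v = lam2 A *\<^sub>R v"
    using lam2_eigenvector[OF sym] by blast
  moreover have "0 < v \<bullet> (A *v v)" using assms \<open>v \<noteq> 0\<close> by (simp add: pd2_def)
  moreover have "0 < v \<bullet> v" using \<open>v \<noteq> 0\<close> by simp
  ultimately show ?thesis by (auto simp: zero_less_mult_iff)
qed

lemma pd2_lam1_pos: "pd2 A \<Longrightarrow> 0 < lam1 A"
  using pd2_lam2_pos lam2_le_lam1 by (fastforce simp: pd2_def)

lemma psd2_sub_scaleR_iff: "transpose A = A \<Longrightarrow> psd2 (A - \<mu> *\<^sub>R mat 1) \<longleftrightarrow> \<mu> \<le> lam2 A"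
  by (simp add: psd2_iff_lam2 lam2_sub_scaleR symmetric_2_iff)

lemma psd2_scaleR_sub_iff: "transpose A = A \<Longrightarrow> psd2 (\<mu> *\<^sub>R mat 1 - A) \<longleftrightarrow> lam1 A \<le> \<mu>"
  by (simp add: psd2_iff_lam2 lam2_scaleR_sub symmetric_2_iff)

lemma psd2_add: "psd2 A \<Longrightarrow> psd2 B \<Longrightarrow> psd2 (A + B)"
  by (simp add: psd2_def matrix_vector_mult_add_rdistrib inner_add_right transpose_def vec_eq_iff)

lemma pd2_add: "pd2 A \<Longrightarrow> psd2 B \<Longrightarrow> pd2 (A + B)"
  by (simp add: pd2_def psd2_def matrix_vector_mult_add_rdistrib inner_add_right
      transpose_def vec_eq_iff add_pos_nonneg)

lemma pd2_mat_1: "pd2 (mat 1)"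
  by (simp add: pd2_def)

lemma lam2_mono:
  assumes "transpose A = A" and "psd2 G"
  shows "lam2 A \<le> lam2 (A + G)"
proof -
  have "psd2 (A - lam2 A *\<^sub>R mat 1 + G)"
    using assms by (simp add: psd2_add psd2_sub_scaleR_iff)
  moreover have "transpose (A + G) = A + G"
    using assms by (simp add: psd2_def transpose_def vec_eq_iff)
  ultimately show ?thesis
    by (simp add: psd2_sub_scaleR_iff[symmetric] algebra_simps)
qed

lemma psd2_congruence:
  assumes "psd2 A"
  shows "psd2 (transpose C ** A ** C)"
proof -
  have "v \<bullet> ((transpose C ** A ** C) *v v) = (C *v v) \<bullet> (A *v (C *v v))" for v
  proof -
    have "v \<bullet> ((transpose C ** A ** C) *v v) = ((A *v (C *v v)) v* C) \<bullet> v"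
      by (simp add: matrix_vector_mul_assoc[symmetric]) (rule inner_commute)
    also have "\<dots> = (C *v v) \<bullet> (A *v (C *v v))"
      by (subst dot_lmul_matrix) (rule inner_commute)
    finally show ?thesis .
  qed
  then show ?thesis
    using assms by (simp add: psd2_def matrix_transpose_mul matrix_mul_assoc)
qed

section \<open>Inverse and square root\<close>

lemma matrix_diff_ldistrib: "(A::'a::comm_ring_1^'n^'m) ** (B - C) = A ** B - A ** C"
  by (simp add: vec_eq_iff matrix_matrix_mult_def sum_subtractf algebra_simps)

lemma matrix_diff_rdistrib: "((A::'a::comm_ring_1^'n^'m) - B) ** C = A ** C - B ** C"
  by (simp add: vec_eq_iff matrix_matrix_mult_def sum_subtractf algebra_simps)

lemma matrix_inv_mult:
  assumes "invertible A"
  shows "A ** matrix_inv A = mat 1" and "matrix_inv A ** A = mat 1"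
  using someI_ex[OF assms[unfolded invertible_def]] by (simp_all add: matrix_inv_def)

lemma matrix_inv_unique:
  fixes A B :: "'a::field^'n^'n"
  assumes "A ** B = mat 1"
  shows "matrix_inv A = B"
proof -
  have "invertible A" using assms invertible_right_inverse by blast
  then have "B = (matrix_inv A ** A) ** B" by (simp add: matrix_inv_mult)
  also have "\<dots> = matrix_inv A" using assms by (simp add: matrix_mul_assoc[symmetric])
  finally show ?thesis by simp
qed

lemma invertible_matrix_inv: "invertible A \<Longrightarrow> invertible (matrix_inv A)"
  using matrix_inv_mult unfolding invertible_def by blast

lemma matrix_inv_matrix_inv: "invertible (A::'a::field^'n^'n) \<Longrightarrow> matrix_inv (matrix_inv A) = A"
  by (rule matrix_inv_unique) (rule matrix_inv_mult)

lemma symmetric_matrix_inv: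
  fixes A :: "'a::field^'n^'n"
  assumes "transpose A = A" and "invertible A"
  shows "transpose (matrix_inv A) = matrix_inv A"
proof -
  have "A ** transpose (matrix_inv A) = transpose (matrix_inv A ** A)"
    by (simp add: matrix_transpose_mul assms(1))
  also have "\<dots> = mat 1"
    by (simp add: matrix_inv_mult assms(2))
  finally show ?thesis by (rule matrix_inv_unique[symmetric])
qed

lemma pd2_invertible:
  assumes "pd2 A"
  shows "invertible A"
proof -
  have "det A = lam1 A * lam2 A" using assms by (simp add: det_eq_lam1_lam2 pd2_def)
  then show ?thesis
    using pd2_lam1_pos[OF assms] pd2_lam2_pos[OF assms] by (simp add: invertible_det_nz)
qed

lemma inverse_in_eigvals2_matrix_inv:
  assumes "invertible A" and "l \<in> eigvals2 A"
  shows "inverse l \<in> eigvals2 (matrix_inv A)"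
proof -
  obtain v where "v \<noteq> 0" and v: "A *v v = l *\<^sub>R v"
    using assms(2) by (auto simp: eigvals2_def)
  define w where "w = matrix_inv A *v v"
  have "v = matrix_inv A *v (A *v v)"
    by (simp add: matrix_vector_mul_assoc matrix_inv_mult assms(1))
  then have eq: "v = l *\<^sub>R w"
    by (simp add: v w_def matrix_vector_mult_scaleR)
  then have "l \<noteq> 0" using \<open>v \<noteq> 0\<close> by auto
  then have "w = inverse l *\<^sub>R v" using eq by simp
  then show ?thesis using \<open>v \<noteq> 0\<close> by (auto simp: eigvals2_def w_def)
qed

lemma eigvals2_matrix_inv:
  assumes "invertible A"
  shows "eigvals2 (matrix_inv A) = inverse ` eigvals2 A"
proof
  show "inverse ` eigvals2 A \<subseteq> eigvals2 (matrix_inv A)"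
    using inverse_in_eigvals2_matrix_inv[OF assms] by blast
  show "eigvals2 (matrix_inv A) \<subseteq> inverse ` eigvals2 A"
  proof
    fix l assume "l \<in> eigvals2 (matrix_inv A)"
    then have "inverse l \<in> eigvals2 A"
      using inverse_in_eigvals2_matrix_inv[OF invertible_matrix_inv[OF assms]]
      by (simp add: matrix_inv_matrix_inv assms)
    then show "l \<in> inverse ` eigvals2 A" by (metis image_eqI inverse_inverse_eq)
  qed
qed

lemma lam_matrix_inv:
  assumes "pd2 A"
  shows "lam1 (matrix_inv A) = 1 / lam2 A" and "lam2 (matrix_inv A) = 1 / lam1 A"
proof -
  have sym: "transpose A = A" using assms by (simp add: pd2_def)
  have eig: "eigvals2 (matrix_inv A) = {inverse (lam2 A), inverse (lam1 A)}"
    using eigvals2_matrix_inv[OF pd2_invertible[OF assms]] eigvals2_eq_lam[OF sym] by simp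
  have le: "inverse (lam1 A) \<le> inverse (lam2 A)"
    using lam2_le_lam1[OF sym] pd2_lam2_pos[OF assms] by (rule le_imp_inverse_le)
  show "lam1 (matrix_inv A) = 1 / lam2 A"
    unfolding lam1_def[of "matrix_inv A"] eig using le by (simp add: max_absorb1 inverse_eq_divide)
  show "lam2 (matrix_inv A) = 1 / lam1 A"
    unfolding lam2_def[of "matrix_inv A"] eig using le by (simp add: min_absorb2 inverse_eq_divide)
qed

lemma pd2_sqrt:
  assumes "pd2 P"
  obtains R where "transpose R = R" and "invertible R" and "R ** R = P"
proof -
  have sym: "transpose P = P" using assms by (simp add: pd2_def)
  have det: "0 < det P" and tr: "0 < trace P"
    using pd2_lam1_pos[OF assms] pd2_lam2_pos[OF assms]
    by (simp_all add: det_eq_lam1_lam2[OF sym] trace_eq_lam1_lam2[OF sym])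
  define s where "s = sqrt (det P)"
  define t where "t = trace P + 2 * s"
  have "0 \<le> s" and s2: "s * s = det P" using det by (simp_all add: s_def)
  then have "0 < t" using tr by (simp add: t_def)
  define R where "R = (1 / sqrt t) *\<^sub>R (P + s *\<^sub>R mat 1)"
  \<comment> \<open>By Cayley-Hamilton, P^2 = tr P * P - det P * I, hence (P + s I)^2 = t P.\<close>
  have "(P + s *\<^sub>R mat 1) ** (P + s *\<^sub>R mat 1) = t *\<^sub>R P"
    using sym s2 by (simp add: mat2_eq_iff matrix_matrix_mult_2 symmetric_2_iff
        t_def trace_2 det_2 algebra_simps)
  then have RR: "R ** R = P"
    using \<open>0 < t\<close> by (simp add: R_def matrix_scalar_ac scalar_matrix_assoc[symmetric])
  moreover have "transpose R = R"
    using sym by (simp add: R_def symmetric_2_iff)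
  moreover have "invertible R"
    using RR det det_mul[of R R] by (auto simp: invertible_det_nz)
  ultimately show ?thesis using that by blast
qed

lemma psd2_mat_1_sub_matrix_inv:
  assumes "psd2 (T - mat 1)"
  shows "psd2 (mat 1 - matrix_inv T)"
proof -
  have T: "pd2 T" using pd2_add[OF pd2_mat_1 assms] by simp
  then have "1 \<le> lam2 T"
    using assms psd2_sub_scaleR_iff[of T 1] by (simp add: pd2_def)
  then have "lam1 (matrix_inv T) \<le> 1"
    by (simp add: lam_matrix_inv[OF T])
  then show ?thesis
    using psd2_scaleR_sub_iff[of "matrix_inv T" 1] T
    by (simp add: symmetric_matrix_inv pd2_invertible pd2_def)
qed

lemma psd2_matrix_inv_antimono:
  assumes P: "pd2 P" and QP: "psd2 (Q - P)"
  shows "psd2 (matrix_inv P - matrix_inv Q)"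
proof -
  obtain R where R: "transpose R = R" "invertible R" and RR: "R ** R = P"
    using pd2_sqrt[OF P] by blast
  define S where "S = matrix_inv R"
  have S: "transpose S = S" "R ** S = mat 1" "S ** R = mat 1"
    using R by (simp_all add: S_def symmetric_matrix_inv matrix_inv_mult)
  have Q: "pd2 Q" using pd2_add[OF P QP] by simp
  have SPS: "S ** P ** S = mat 1"
    by (metis RR S(2,3) matrix_mul_assoc matrix_mul_lid)
  \<comment> \<open>With S = P^(-1/2): T = S Q S >= I, so T^-1 = R Q^-1 R <= I and P^-1 - Q^-1 = S (I - T^-1) S.\<close>
  define T where "T = S ** Q ** S"
  have "T - mat 1 = transpose S ** (Q - P) ** S"
    by (simp add: T_def S(1) SPS matrix_diff_ldistrib matrix_diff_rdistrib)
  then have "psd2 (T - mat 1)"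
    using psd2_congruence[OF QP] by simp
  then have "psd2 (mat 1 - matrix_inv T)"
    by (rule psd2_mat_1_sub_matrix_inv)
  moreover have "matrix_inv T = R ** matrix_inv Q ** R"
  proof (rule matrix_inv_unique)
    have "T ** (R ** matrix_inv Q ** R) = S ** Q ** (S ** R) ** matrix_inv Q ** R"
      by (simp add: T_def matrix_mul_assoc)
    also have "\<dots> = S ** (Q ** matrix_inv Q) ** R"
      by (simp add: S matrix_mul_assoc)
    finally show "T ** (R ** matrix_inv Q ** R) = mat 1"
      by (simp add: S matrix_inv_mult pd2_invertible[OF Q])
  qed
  moreover have "matrix_inv P - matrix_inv Q = transpose S ** (mat 1 - R ** matrix_inv Q ** R) ** S"
  proof -
    have "matrix_inv P = S ** S"
      by (rule matrix_inv_unique) (metis RR S(2) matrix_mul_assoc matrix_mul_rid)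
    moreover have "S ** (R ** matrix_inv Q ** R) ** S = matrix_inv Q"
      by (metis S(2,3) matrix_mul_assoc matrix_mul_lid matrix_mul_rid)
    ultimately show ?thesis
      by (simp add: S(1) matrix_diff_ldistrib matrix_diff_rdistrib)
  qed
  ultimately show ?thesis
    using psd2_congruence by simp
qed

section \<open>Trace inequalities\<close>

lemma trace_mult_psd2_nonneg:
  assumes "psd2 S" and "psd2 T"
  shows "0 \<le> trace (S ** T)"
proof -
  have S: "S$2$1 = S$1$2" "0 \<le> S$1$1" "0 \<le> S$2$2" "(S$1$2)^2 \<le> S$1$1 * S$2$2"
    and T: "T$2$1 = T$1$2" "0 \<le> T$1$1" "0 \<le> T$2$2" "(T$1$2)^2 \<le> T$1$1 * T$2$2"
    using assms by (simp_all add: psd2_iff_entries)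
  have "(S$1$2 * T$1$2)^2 \<le> (S$1$1 * S$2$2) * (T$1$1 * T$2$2)"
    unfolding power_mult_distrib using S T by (intro mult_mono) simp_all
  then have "0 \<le> (S$1$1 * T$1$1) * 1^2 + 2 * (S$1$2 * T$1$2) * 1 * 1 + (S$2$2 * T$2$2) * 1^2"
    using S T by (intro quadratic_form_nonneg) (simp_all add: algebra_simps)
  then show ?thesis
    using S T by (simp add: trace_2 matrix_matrix_mult_2 algebra_simps)
qed

lemma trace_mult_lam_bounds:
  assumes "psd2 S" and "transpose X = X"
  shows "lam2 X * trace S \<le> trace (S ** X)" and "trace (S ** X) \<le> lam1 X * trace S"
proof -
  have "psd2 (X - lam2 X *\<^sub>R mat 1)" and "psd2 (lam1 X *\<^sub>R mat 1 - X)"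
    using assms(2) by (simp_all add: psd2_sub_scaleR_iff psd2_scaleR_sub_iff)
  then have "0 \<le> trace (S ** (X - lam2 X *\<^sub>R mat 1))" and "0 \<le> trace (S ** (lam1 X *\<^sub>R mat 1 - X))"
    using assms(1) by (simp_all add: trace_mult_psd2_nonneg)
  then show "lam2 X * trace S \<le> trace (S ** X)" and "trace (S ** X) \<le> lam1 X * trace S"
    by (simp_all add: trace_2 matrix_matrix_mult_2 algebra_simps)
qed

lemma trace_matrix_inv_diff_bounds:
  assumes P: "pd2 P" and G: "psd2 G"
  shows "trace G / (lam1 P * lam1 (P + G)) \<le> trace (matrix_inv P) - trace (matrix_inv (P + G))"
    and "trace (matrix_inv P) - trace (matrix_inv (P + G)) \<le> trace G / (lam2 P * lam2 (P + G))"
proof -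
  define Q where "Q = P + G"
  have Q: "pd2 Q" using pd2_add[OF P G] by (simp add: Q_def)
  define D where "D = matrix_inv P - matrix_inv Q"
  have D: "psd2 D" using psd2_matrix_inv_antimono[OF P] G by (simp add: D_def Q_def)
  have "D ** P = mat 1 - matrix_inv Q ** P"
    by (simp add: D_def matrix_diff_rdistrib matrix_inv_mult pd2_invertible[OF P])
  also have "\<dots> = matrix_inv Q ** (Q - P)"
    by (simp add: matrix_diff_ldistrib matrix_inv_mult pd2_invertible[OF Q])
  finally have "D ** P = matrix_inv Q ** G"
    by (simp add: Q_def)
  then have DP: "trace (D ** P) = trace (G ** matrix_inv Q)"
    by (metis trace_mul_sym)
  have symP: "transpose P = P" using P by (simp add: pd2_def)
  have symQ': "transpose (matrix_inv Q) = matrix_inv Q"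
    using Q by (simp add: symmetric_matrix_inv pd2_invertible pd2_def)
  have "trace G / lam1 Q \<le> trace D * lam1 P"
    using trace_mult_lam_bounds(1)[OF G symQ'] trace_mult_lam_bounds(2)[OF D symP] DP
    by (simp add: lam_matrix_inv[OF Q] mult.commute)
  then have "trace G / lam1 Q / lam1 P \<le> trace D"
    using pd2_lam1_pos[OF P] by (simp only: pos_divide_le_eq)
  then show "trace G / (lam1 P * lam1 (P + G)) \<le> trace (matrix_inv P) - trace (matrix_inv (P + G))"
    by (simp add: D_def Q_def trace_sub mult.commute)
  have "trace D * lam2 P \<le> trace G / lam2 Q"
    using trace_mult_lam_bounds(2)[OF G symQ'] trace_mult_lam_bounds(1)[OF D symP] DP
    by (simp add: lam_matrix_inv[OF Q] mult.commute)
  then have "trace D \<le> trace G / lam2 Q / lam2 P"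
    using pd2_lam2_pos[OF P] by (simp only: pos_le_divide_eq)
  then show "trace (matrix_inv P) - trace (matrix_inv (P + G)) \<le> trace G / (lam2 P * lam2 (P + G))"
    by (simp add: D_def Q_def trace_sub mult.commute)
qed

section \<open>The greedy submodularity ratio of f_Pa\<close>

lemma psd2_zero: "psd2 0"
  by (simp add: psd2_iff_entries)

lemma trace_psd2_nonneg: "psd2 A \<Longrightarrow> 0 \<le> trace A"
  by (simp add: psd2_iff_entries trace_2)

lemma Hset_insert: "finite X \<Longrightarrow> y \<notin> X \<Longrightarrow> Hset H (insert y X) = H y + Hset H X"
  by (simp add: Hset_def)

lemma Hset_subset_diff: "finite X \<Longrightarrow> Y \<subseteq> X \<Longrightarrow> Hset H X = Hset H Y + Hset H (X - Y)"
  by (simp add: Hset_def sum.subset_diff add.commute)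

lemma psd2_Hset: "\<forall>y\<in>X. psd2 (H y) \<Longrightarrow> psd2 (Hset H X)"
  unfolding Hset_def
  by (induction X rule: infinite_finite_induct) (simp_all add: psd2_zero psd2_add)

lemma trace_Hset: "trace (Hset H X) = (\<Sum>y\<in>X. trace (H y))"
  unfolding Hset_def
  by (induction X rule: infinite_finite_induct) (simp_all add: trace_2 trace_add)

lemma sum_trace_matrix_inv_gain_ge:
  assumes P: "pd2 P" and X: "finite X" and H: "\<forall>y\<in>X. psd2 (H y)"
    and "0 \<le> \<rho>" and rho: "\<forall>y\<in>X. \<rho> \<le> lam2 (P + H y) / lam1 (P + H y)"
  shows "lam2 P / lam1 P * \<rho> * (trace (matrix_inv P) - trace (matrix_inv (P + Hset H X)))
         \<le> (\<Sum>y\<in>X. trace (matrix_inv P) - trace (matrix_inv (P + H y)))"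
proof -
  define Q where "Q = P + Hset H X"
  have G: "psd2 (Hset H X)" using H by (rule psd2_Hset)
  have Q: "pd2 Q" using pd2_add[OF P G] by (simp add: Q_def)
  have pos: "0 < lam1 P" "0 < lam2 P" "0 < lam2 Q"
    using P Q by (simp_all add: pd2_lam1_pos pd2_lam2_pos)
  have each: "trace (H y) * \<rho> / (lam1 P * lam2 Q)
      \<le> trace (matrix_inv P) - trace (matrix_inv (P + H y))" if y: "y \<in> X" for y
  proof -
    have Hy: "psd2 (H y)" using H y by blast
    have Py: "pd2 (P + H y)" using pd2_add[OF P Hy] .
    have "Q = (P + H y) + Hset H (X - {y})"
      using Hset_insert[of "X - {y}" y H] X y by (simp add: Q_def insert_absorb add.assoc)
    then have "lam2 (P + H y) \<le> lam2 Q"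
      using lam2_mono[of "P + H y" "Hset H (X - {y})"] Py H by (simp add: pd2_def psd2_Hset)
    moreover have "\<rho> * lam1 (P + H y) \<le> lam2 (P + H y)"
      using rho y pos_le_divide_eq[OF pd2_lam1_pos[OF Py]] by blast
    ultimately have "\<rho> / lam2 Q \<le> 1 / lam1 (P + H y)"
      using pos pd2_lam1_pos[OF Py] by (simp add: field_simps)
    then have "trace (H y) / lam1 P * (\<rho> / lam2 Q) \<le> trace (H y) / lam1 P * (1 / lam1 (P + H y))"
      using pos trace_psd2_nonneg[OF Hy] by (intro mult_left_mono) simp_all
    also have "\<dots> \<le> trace (matrix_inv P) - trace (matrix_inv (P + H y))"
      using trace_matrix_inv_diff_bounds(1)[OF P Hy] by simp
    finally show ?thesis by simp
  qed
  have "lam2 P / lam1 P * \<rho> * (trace (matrix_inv P) - trace (matrix_inv Q))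
      \<le> lam2 P / lam1 P * \<rho> * (trace (Hset H X) / (lam2 P * lam2 Q))"
    using trace_matrix_inv_diff_bounds(2)[OF P G] pos \<open>0 \<le> \<rho>\<close>
    by (intro mult_left_mono) (simp_all add: Q_def)
  also have "\<dots> = trace (Hset H X) * \<rho> / (lam1 P * lam2 Q)"
    using pos by (simp add: field_simps)
  also have "\<dots> = (\<Sum>y\<in>X. trace (H y) * \<rho> / (lam1 P * lam2 Q))"
    by (simp add: trace_Hset sum_distrib_right sum_divide_distrib)
  also have "\<dots> \<le> (\<Sum>y\<in>X. trace (matrix_inv P) - trace (matrix_inv (P + H y)))"
    using each by (rule sum_mono)
  finally show ?thesis by (simp add: Q_def)
qed

lemma fPa_mono:
  assumes Fp: "pd2 Fp" and "finite X" and H: "\<forall>y\<in>X. psd2 (H y)" and "Y \<subseteq> X"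
  shows "fPa Fp H Y \<le> fPa Fp H X"
proof -
  have P: "pd2 (Fp + Hset H Y)"
    using pd2_add[OF Fp] psd2_Hset H \<open>Y \<subseteq> X\<close> by (meson subsetD)
  have "Fp + Hset H X - (Fp + Hset H Y) = Hset H (X - Y)"
    using Hset_subset_diff[OF assms(2,4)] by simp
  moreover have "psd2 (Hset H (X - Y))"
    using H by (intro psd2_Hset) blast
  ultimately have "psd2 (Fp + Hset H X - (Fp + Hset H Y))"
    by simp
  then have "psd2 (matrix_inv (Fp + Hset H Y) - matrix_inv (Fp + Hset H X))"
    by (rule psd2_matrix_inv_antimono[OF P])
  then show ?thesis
    using trace_psd2_nonneg by (fastforce simp: fPa_def trace_sub)
qed

lemma fPa_marginal_sum_ge:
  assumes Fp: "pd2 Fp" and M: "finite M" and H: "\<forall>y\<in>M. psd2 (H y)" and "Y \<subseteq> M" and "A \<subseteq> M"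
    and z: "z \<in> M - Y \<and> (\<forall>y\<in>M - Y.
              lam2 (Fp + Hset H (insert z Y)) / lam1 (Fp + Hset H (insert z Y))
            \<le> lam2 (Fp + Hset H (insert y Y)) / lam1 (Fp + Hset H (insert y Y)))"
    and g: "g \<le> lam2 (Fp + Hset H Y) * lam2 (Fp + Hset H (insert z Y))
               / (lam1 (Fp + Hset H Y) * lam1 (Fp + Hset H (insert z Y)))"
  shows "g * (fPa Fp H (A \<union> Y) - fPa Fp H Y) \<le> (\<Sum>y\<in>A - Y. fPa Fp H (insert y Y) - fPa Fp H Y)"
proof -
  have fin: "finite Y" "finite A" using M \<open>Y \<subseteq> M\<close> \<open>A \<subseteq> M\<close> finite_subset by blast+
  define P where "P = Fp + Hset H Y"
  have P: "pd2 P" using pd2_add[OF Fp] psd2_Hset H \<open>Y \<subseteq> M\<close> unfolding P_def by (meson subsetD)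
  have insert_eq: "Fp + Hset H (insert y Y) = P + H y" if "y \<notin> Y" for y
    using Hset_insert[OF fin(1) that] by (simp add: P_def add_ac)
  define \<rho> where "\<rho> = lam2 (P + H z) / lam1 (P + H z)"
  have "0 \<le> \<rho>"
    using pd2_lam1_pos pd2_lam2_pos pd2_add[OF P] H z by (simp add: \<rho>_def less_imp_le)
  have "\<forall>y\<in>A \<union> Y. psd2 (H y)" using H \<open>A \<subseteq> M\<close> \<open>Y \<subseteq> M\<close> by blast
  from fPa_mono[OF Fp _ this Un_upper2] have "fPa Fp H Y \<le> fPa Fp H (A \<union> Y)"
    using fin by simp
  then have gain_nonneg: "0 \<le> fPa Fp H (A \<union> Y) - fPa Fp H Y" by simp
  have "g \<le> lam2 P / lam1 P * \<rho>"
    using g z by (simp add: insert_eq P_def \<rho>_def)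
  then have "g * (fPa Fp H (A \<union> Y) - fPa Fp H Y)
      \<le> lam2 P / lam1 P * \<rho> * (fPa Fp H (A \<union> Y) - fPa Fp H Y)"
    using gain_nonneg by (rule mult_right_mono)
  also have "\<dots> = lam2 P / lam1 P * \<rho> * (trace (matrix_inv P) - trace (matrix_inv (P + Hset H (A - Y))))"
    using Hset_subset_diff[of "A \<union> Y" Y H] fin by (simp add: fPa_def P_def add.assoc Un_Diff)
  also have "\<dots> \<le> (\<Sum>y\<in>A - Y. trace (matrix_inv P) - trace (matrix_inv (P + H y)))"
  proof (rule sum_trace_matrix_inv_gain_ge[OF P _ _ \<open>0 \<le> \<rho>\<close>])
    show "\<forall>y\<in>A - Y. \<rho> \<le> lam2 (P + H y) / lam1 (P + H y)"
      using z \<open>A \<subseteq> M\<close> by (auto simp: insert_eq \<rho>_def)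
  qed (use fin H \<open>A \<subseteq> M\<close> in auto)
  also have "\<dots> = (\<Sum>y\<in>A - Y. fPa Fp H (insert y Y) - fPa Fp H Y)"
    by (intro sum.cong) (simp_all add: fPa_def insert_eq P_def)
  finally show ?thesis .
qed

lemma gsr1_ok_Min_ratio:
  assumes Fp: "pd2 Fp" and M: "finite M" and H: "\<forall>y\<in>M. psd2 (H y)"
    and Y: "\<forall>j \<le> n. Y j \<subseteq> M"
    and z: "\<forall>j \<le> n. M - Y j \<noteq> {} \<longrightarrow> z j \<in> M - Y j \<and>
              (\<forall>y \<in> M - Y j.
                 lam2 (Fp + Hset H (insert (z j) (Y j))) / lam1 (Fp + Hset H (insert (z j) (Y j)))
               \<le> lam2 (Fp + Hset H (insert y (Y j))) / lam1 (Fp + Hset H (insert y (Y j))))"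
  shows "gsr1_ok (fPa Fp H) M Y n (Min ((\<lambda>j.
           (lam2 (Fp + Hset H (Y j)) * lam2 (Fp + Hset H (insert (z j) (Y j)))) /
           (lam1 (Fp + Hset H (Y j)) * lam1 (Fp + Hset H (insert (z j) (Y j))))) ` {0..n}))"
    (is "gsr1_ok _ _ _ _ ?g")
  unfolding gsr1_ok_def
proof (intro allI impI)
  fix A j assume A: "A \<subseteq> M" and j: "j \<le> n"
  show "(\<Sum>y\<in>A - Y j. fPa Fp H (insert y (Y j)) - fPa Fp H (Y j))
        \<ge> ?g * (fPa Fp H (A \<union> Y j) - fPa Fp H (Y j))"
  proof (cases "A - Y j = {}")
    case True
    then have "A \<union> Y j = Y j" by blast
    then show ?thesis unfolding True by simp
  next
    case False
    then have "M - Y j \<noteq> {}" using A by blast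
    note zj = z[rule_format, OF j this]
    have "Y j \<subseteq> M" using Y j by blast
    show ?thesis
      by (rule fPa_marginal_sum_ge[OF Fp M H \<open>Y j \<subseteq> M\<close> A zj Min_le], simp,
          rule image_eqI[where x = j], simp_all add: j)
  qed
qed

lemma set_foldl_subset:
  assumes "\<And>S y. set (f S y) \<subseteq> insert y (set S)"
  shows "set (foldl f S ys) \<subseteq> set S \<union> set ys"
  using assms by (induction ys arbitrary: S) (simp, fastforce)

lemma set_greedy_acc_subset: "set (greedy_acc c B ys) \<subseteq> set ys"
  unfolding greedy_acc_def by (rule order_trans[OF set_foldl_subset]) auto

theorem lemma4:
  fixes M :: "'a set" and H :: "'a \<Rightarrow> mat2" and Fp :: mat2
    and c :: "'a \<Rightarrow> real" and B :: real and fh :: "'a set \<Rightarrow> real"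
    and ps :: "'a list" and z :: "nat \<Rightarrow> 'a" and gamma1 :: real
  assumes finM: "finite M"
    and Hpsd: "\<forall>y\<in>M. psd2 (H y)"
    and Fpd: "pd2 Fp"
    and cpos: "\<forall>y\<in>M. c y > 0"
    and Bnn: "B \<ge> 0"
    and fh0: "fh {} = 0"
    and run: "alg2_run fh c B M ps"
    and zmin: "\<forall>j \<le> length (greedy_acc c B ps). M - Y2j c B ps j \<noteq> {} \<longrightarrow>
                 z j \<in> M - Y2j c B ps j \<and>
                 (\<forall>y \<in> M - Y2j c B ps j.
                    lam2 (Fp + Hset H (insert (z j) (Y2j c B ps j))) /
                    lam1 (Fp + Hset H (insert (z j) (Y2j c B ps j)))
                  \<le> lam2 (Fp + Hset H (insert y (Y2j c B ps j))) /
                    lam1 (Fp + Hset H (insert y (Y2j c B ps j))))"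
    and g1_ok: "gsr1_ok (fPa Fp H) M (Y2j c B ps) (length (greedy_acc c B ps)) gamma1"
    and g1_max: "\<forall>g. gsr1_ok (fPa Fp H) M (Y2j c B ps) (length (greedy_acc c B ps)) g \<longrightarrow> g \<le> gamma1"
  shows "gamma1 \<ge> Min ((\<lambda>j.
           (lam2 (Fp + Hset H (Y2j c B ps j)) * lam2 (Fp + Hset H (insert (z j) (Y2j c B ps j)))) /
           (lam1 (Fp + Hset H (Y2j c B ps j)) * lam1 (Fp + Hset H (insert (z j) (Y2j c B ps j)))))
         ` {0..length (greedy_acc c B ps)})"
proof (rule g1_max[rule_format], rule gsr1_ok_Min_ratio[OF Fpd finM Hpsd _ zmin])
  have "set ps = M" using run by (simp add: alg2_run_def)
  then show "\<forall>j \<le> length (greedy_acc c B ps). Y2j c B ps j \<subseteq> M"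
    using set_greedy_acc_subset[of c B ps] set_take_subset[of _ "greedy_acc c B ps"]
    unfolding Y2j_def by blast
qed

end
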